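(* Let $u\in V$ and let $t\le\lceil\frac{n-\kappa}{2}\rceil$ be a positive integer. If there exists a $\kappa$-cut $U$ with $u\notin U$ and $|\mathrm{Side}_U(u)|\le t$, then there is a unique such $\kappa$-cut, denoted $\mathrm{Small}_t(u)$, with $u\notin\mathrm{Small}_t(u)$, $|\mathrm{Side}_{\mathrm{Small}_t(u)}(u)|\le t$, and $\mathrm{Side}_{\mathrm{Small}_t(u)}(u)\subseteq\mathrm{Side}_U(u)$ for every $\kappa$-cut $U$ with $u\notin U$ and $|\mathrm{Side}_U(u)|\le t$.
   Context: $G=(V,E)$ is a finite, simple, connected, undirected, non-complete graph with $n=|V|$; $\kappa$ is its vertex connectivity, assumed $\kappa<n/4$. A cut is a set $U\subset V$ whose removal disconnects $G$; a $\kappa$-cut is a cut of size $\kappa$; a side of $U$ is a connected component of the subgraph induced on $V\setminus U$; for $x\notin U$, $\mathrm{Side}_U(x)$ is the side of $U$ containing $x$. *)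

theory Defs
  imports Complex_Main
begin

definition simple_graph :: "'a set \<Rightarrow> ('a \<Rightarrow> 'a \<Rightarrow> bool) \<Rightarrow> bool" where
  "simple_graph V E \<longleftrightarrow> finite V \<and> (\<forall>x y. E x y \<longrightarrow> x \<in> V \<and> y \<in> V)
     \<and> (\<forall>x y. E x y \<longrightarrow> E y x) \<and> (\<forall>x. \<not> E x x)"

definition reach_in :: "('a \<Rightarrow> 'a \<Rightarrow> bool) \<Rightarrow> 'a set \<Rightarrow> 'a \<Rightarrow> 'a \<Rightarrow> bool" where
  "reach_in E S x y \<longleftrightarrow> x \<in> S \<and> y \<in> S \<and> (\<lambda>a b. E a b \<and> a \<in> S \<and> b \<in> S)\<^sup>*\<^sup>* x y"

definition graph_connected :: "'a set \<Rightarrow> ('a \<Rightarrow> 'a \<Rightarrow> bool) \<Rightarrow> bool" where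
  "graph_connected V E \<longleftrightarrow> V \<noteq> {} \<and> (\<forall>x\<in>V. \<forall>y\<in>V. reach_in E V x y)"

definition graph_complete :: "'a set \<Rightarrow> ('a \<Rightarrow> 'a \<Rightarrow> bool) \<Rightarrow> bool" where
  "graph_complete V E \<longleftrightarrow> (\<forall>x\<in>V. \<forall>y\<in>V. x \<noteq> y \<longrightarrow> E x y)"

definition is_cut :: "'a set \<Rightarrow> ('a \<Rightarrow> 'a \<Rightarrow> bool) \<Rightarrow> 'a set \<Rightarrow> bool" where
  "is_cut V E U \<longleftrightarrow> U \<subseteq> V \<and> (\<exists>x\<in>V - U. \<exists>y\<in>V - U. \<not> reach_in E (V - U) x y)"

text \<open>Vertex connectivity: minimum size of a cut (G non-complete).\<close>
definition vertex_connectivity :: "'a set \<Rightarrow> ('a \<Rightarrow> 'a \<Rightarrow> bool) \<Rightarrow> nat" where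
  "vertex_connectivity V E = Min {card U | U. is_cut V E U}"

definition is_kappa_cut :: "'a set \<Rightarrow> ('a \<Rightarrow> 'a \<Rightarrow> bool) \<Rightarrow> 'a set \<Rightarrow> bool" where
  "is_kappa_cut V E U \<longleftrightarrow> is_cut V E U \<and> card U = vertex_connectivity V E"

definition side :: "'a set \<Rightarrow> ('a \<Rightarrow> 'a \<Rightarrow> bool) \<Rightarrow> 'a set \<Rightarrow> 'a \<Rightarrow> 'a set" where
  "side V E U x = {y. reach_in E (V - U) x y}"

end

theory Submission
  imports Defs
begin

text \<open>Among the \<kappa>-cuts U with u \<notin> U and |Side(u)| \<le> t take one, S, whose side A of u
is smallest. For any other such cut W with side B of u, the corner A \<inter> B is separated from
the rest of the graph by C = (A \<union> U) \<inter> (B \<union> W) - A \<inter> B. Submodularity gives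
|C| + |C'| = |U| + |W| = 2\<kappa> for the opposite corner separator C', so |C| \<le> \<kappa> as soon as
the opposite corner is nonempty (then C' is a cut); if it is empty, counting vertices with
2t \<le> n - \<kappa> + 1 gives |C| \<le> \<kappa> directly. Hence C is a \<kappa>-cut whose side of u lies in
A \<inter> B, and minimality of A forces A \<subseteq> B. Uniqueness holds because a \<kappa>-cut is the
neighbourhood of each of its sides.\<close>

definition neighbours :: "('a \<Rightarrow> 'a \<Rightarrow> bool) \<Rightarrow> 'a set \<Rightarrow> 'a set" where
  "neighbours E X = {y. \<exists>x\<in>X. E x y}"

definition corner_separator :: "'a set \<Rightarrow> 'a set \<Rightarrow> 'a set \<Rightarrow> 'a set \<Rightarrow> 'a set" where
  "corner_separator X U Y W = (X \<union> U) \<inter> (Y \<union> W) - X \<inter> Y"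

lemma reach_in_refl: "x \<in> S \<Longrightarrow> reach_in E S x x"
  unfolding reach_in_def by auto

lemma reach_in_trans: "reach_in E S x y \<Longrightarrow> reach_in E S y z \<Longrightarrow> reach_in E S x z"
  unfolding reach_in_def by (meson rtranclp_trans)

lemma reach_in_sym:
  assumes "\<And>x y. E x y \<Longrightarrow> E y x" and "reach_in E S x y"
  shows "reach_in E S y x"
proof -
  have "(\<lambda>a b. E a b \<and> a \<in> S \<and> b \<in> S)\<^sup>*\<^sup>* x y"
    using assms(2) unfolding reach_in_def by blast
  then have "(\<lambda>a b. E a b \<and> a \<in> S \<and> b \<in> S)\<^sup>*\<^sup>* y x"
    by (induction rule: rtranclp_induct) (auto intro: converse_rtranclp_into_rtranclp assms(1))
  then show ?thesis using assms(2) unfolding reach_in_def by blast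
qed

lemma reach_in_closed:
  assumes "reach_in E S x y" and "x \<in> X" and "neighbours E X \<inter> S \<subseteq> X"
  shows "y \<in> X"
proof -
  have "(\<lambda>a b. E a b \<and> a \<in> S \<and> b \<in> S)\<^sup>*\<^sup>* x y"
    using assms(1) unfolding reach_in_def by blast
  then show ?thesis
    by (induction rule: rtranclp_induct) (use assms(2,3) in \<open>auto simp: neighbours_def\<close>)
qed

lemma side_subset: "side V E S u \<subseteq> V - S"
  unfolding side_def reach_in_def by auto

lemma finite_side: "simple_graph V E \<Longrightarrow> finite (side V E S u)"
  using side_subset[of V E S u] unfolding simple_graph_def by (meson finite_Diff finite_subset)

lemma in_side_self: "u \<in> V - S \<Longrightarrow> u \<in> side V E S u"
  unfolding side_def by (simp add: reach_in_refl)

lemma neighbours_side_subset: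
  assumes "simple_graph V E"
  shows "neighbours E (side V E S u) \<subseteq> side V E S u \<union> S"
proof
  fix y assume "y \<in> neighbours E (side V E S u)"
  then obtain x where "reach_in E (V - S) u x" "E x y"
    unfolding neighbours_def side_def by blast
  moreover have "y \<in> V" using \<open>E x y\<close> assms unfolding simple_graph_def by blast
  ultimately show "y \<in> side V E S u \<union> S"
    unfolding side_def reach_in_def by (auto intro: rtranclp.rtrancl_into_rtrancl)
qed

lemma side_subset_if_closed:
  assumes "neighbours E X \<subseteq> X \<union> S" and "u \<in> X"
  shows "side V E S u \<subseteq> X"
  using reach_in_closed[of E "V - S" u _ X] assms unfolding side_def by blast

lemma is_cut_if_closed:
  assumes "S \<subseteq> V" and "neighbours E X \<subseteq> X \<union> S" and "u \<in> X - S" and "u \<in> V"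
    and "y \<in> V - S - X"
  shows "is_cut V E S"
proof -
  have "\<not> reach_in E (V - S) u y"
    using side_subset_if_closed[OF assms(2), of u V] assms(3,5) unfolding side_def by blast
  then show ?thesis unfolding is_cut_def using assms by blast
qed

lemma exists_outside_side:
  assumes "simple_graph V E" and "is_cut V E S"
  obtains y where "y \<in> V - S" and "y \<notin> side V E S u"
proof -
  obtain a b where ab: "a \<in> V - S" "b \<in> V - S" "\<not> reach_in E (V - S) a b"
    using assms(2) unfolding is_cut_def by blast
  have sym: "\<And>x y. E x y \<Longrightarrow> E y x" using assms(1) unfolding simple_graph_def by blast
  have "reach_in E (V - S) a b" if "a \<in> side V E S u" "b \<in> side V E S u"
  proof -
    have "reach_in E (V - S) a u" using that(1) reach_in_sym[OF sym] unfolding side_def by simp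
    moreover have "reach_in E (V - S) u b" using that(2) unfolding side_def by simp
    ultimately show ?thesis by (rule reach_in_trans)
  qed
  then have "a \<notin> side V E S u \<or> b \<notin> side V E S u" using ab(3) by blast
  then show ?thesis using that ab(1,2) by blast
qed

lemma vertex_connectivity_le_card:
  assumes "finite V" and "is_cut V E C"
  shows "vertex_connectivity V E \<le> card C"
proof -
  have "{card U | U. is_cut V E U} \<subseteq> card ` Pow V" unfolding is_cut_def by auto
  then have "finite {card U | U. is_cut V E U}" using assms(1) finite_subset by blast
  then show ?thesis unfolding vertex_connectivity_def using assms(2) by (intro Min_le) auto
qed

lemma kappa_cut_eq_neighbours_side:
  assumes "simple_graph V E" and "is_kappa_cut V E S" and "u \<in> V" and "u \<notin> S"
  shows "S = neighbours E (side V E S u) - side V E S u"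
proof -
  define C where "C = side V E S u"
  define N where "N = neighbours E C - C"
  have fin: "finite V" using assms(1) unfolding simple_graph_def by blast
  have cut: "is_cut V E S" and card_S: "card S = vertex_connectivity V E"
    using assms(2) unfolding is_kappa_cut_def by auto
  have "finite S" using cut fin unfolding is_cut_def by (meson finite_subset)
  have "N \<subseteq> S" using neighbours_side_subset[OF assms(1), of S u] unfolding N_def C_def by blast
  obtain y where y: "y \<in> V - S" "y \<notin> C"
    using exists_outside_side[OF assms(1) cut, of u] unfolding C_def .
  have "is_cut V E N"
  proof (rule is_cut_if_closed)
    show "N \<subseteq> V" using \<open>N \<subseteq> S\<close> cut unfolding is_cut_def by blast
    show "neighbours E C \<subseteq> C \<union> N" unfolding N_def by blast
    show "u \<in> C - N" using in_side_self[of u V S E] assms(3,4) unfolding N_def C_def by blast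
    show "y \<in> V - N - C" using y \<open>N \<subseteq> S\<close> by blast
  qed (use assms(3) in blast)
  then have "card S \<le> card N" unfolding card_S by (rule vertex_connectivity_le_card[OF fin])
  then have "N = S" using card_seteq[OF \<open>finite S\<close> \<open>N \<subseteq> S\<close>] by blast
  then show ?thesis unfolding N_def C_def by simp
qed

lemma neighbours_complement_subset:
  assumes "simple_graph V E" and "neighbours E X \<subseteq> X \<union> S"
  shows "neighbours E (V - S - X) \<subseteq> (V - S - X) \<union> S"
  using assms unfolding simple_graph_def neighbours_def by blast

lemma neighbours_Int_subset:
  assumes "neighbours E X \<subseteq> X \<union> U" and "neighbours E Y \<subseteq> Y \<union> W"
  shows "neighbours E (X \<inter> Y) \<subseteq> (X \<inter> Y) \<union> corner_separator X U Y W"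
  using assms unfolding neighbours_def corner_separator_def by blast

lemma card_corner_separators:
  assumes "finite V" and "U \<subseteq> V" and "W \<subseteq> V" and "X \<inter> U = {}" and "Y \<inter> W = {}"
  shows "card (corner_separator X U Y W) + card (corner_separator (V - U - X) U (V - W - Y) W)
    = card U + card W"
proof -
  let ?C = "corner_separator X U Y W" and ?C' = "corner_separator (V - U - X) U (V - W - Y) W"
  have "?C \<union> ?C' = U \<union> W" "?C \<inter> ?C' = U \<inter> W"
    using assms(2-5) unfolding corner_separator_def by blast+
  moreover have "finite ?C" "finite ?C'" "finite U" "finite W"
    using assms(1-3) unfolding corner_separator_def by (auto intro: finite_subset)
  ultimately show ?thesis by (metis card_Un_Int)
qed

lemma card_corner_separator_cover:
  assumes "finite X" "finite Y" "finite U" "finite W" and "X \<inter> U = {}" and "Y \<inter> W = {}"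
  shows "card (corner_separator X U Y W) + card (X \<union> U \<union> Y \<union> W) + card (X \<inter> Y)
    = card X + card U + card Y + card W"
proof -
  have "X \<inter> Y \<subseteq> (X \<union> U) \<inter> (Y \<union> W)" and "finite ((X \<union> U) \<inter> (Y \<union> W))"
    using assms(1-4) by auto
  then have "card (corner_separator X U Y W) + card (X \<inter> Y) = card ((X \<union> U) \<inter> (Y \<union> W))"
    unfolding corner_separator_def
    by (metis card_Diff_subset card_mono finite_subset le_add_diff_inverse2)
  moreover have "card ((X \<union> U) \<inter> (Y \<union> W)) + card (X \<union> U \<union> Y \<union> W)
      = card (X \<union> U) + card (Y \<union> W)"
    using card_Un_Int[of "X \<union> U" "Y \<union> W"] assms(1-4) by (simp add: Un_assoc)
  moreover have "card (X \<union> U) = card X + card U" "card (Y \<union> W) = card Y + card W"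
    using assms by (simp_all add: card_Un_disjoint)
  ultimately show ?thesis by linarith
qed

lemma card_corner_separator_le:
  assumes G: "simple_graph V E" and U: "is_kappa_cut V E U" and W: "is_kappa_cut V E W"
    and u: "u \<in> V" "u \<notin> U" "u \<notin> W"
    and small: "card (side V E U u) + card (side V E W u) + vertex_connectivity V E \<le> card V + 1"
  shows "card (corner_separator (side V E U u) U (side V E W u) W) \<le> vertex_connectivity V E"
proof -
  let ?k = "vertex_connectivity V E"
  define A where "A = side V E U u"
  define B where "B = side V E W u"
  define C where "C = corner_separator A U B W"
  define C' where "C' = corner_separator (V - U - A) U (V - W - B) W"
  have fin: "finite V" using G unfolding simple_graph_def by blast
  have UV: "U \<subseteq> V" "card U = ?k" and WV: "W \<subseteq> V" "card W = ?k"
    using U W unfolding is_kappa_cut_def is_cut_def by auto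
  have AV: "A \<subseteq> V - U" and BV: "B \<subseteq> V - W"
    unfolding A_def B_def by (rule side_subset)+
  have fins: "finite A" "finite B" "finite U" "finite W"
    using finite_side[OF G] UV(1) WV(1) fin finite_subset unfolding A_def B_def by auto
  have "card C \<le> ?k"
  proof (cases "(V - U - A) \<inter> (V - W - B) = {}")
    case True
    have "A \<union> U \<union> B \<union> W = V" using True AV BV UV(1) WV(1) by auto
    moreover have "A \<inter> U = {}" "B \<inter> W = {}" using AV BV by blast+
    ultimately have "card C + card V + card (A \<inter> B) = card A + card U + card B + card W"
      using card_corner_separator_cover[OF fins] unfolding C_def by metis
    moreover have "u \<in> A \<inter> B"
      using u in_side_self[of u V U E] in_side_self[of u V W E] unfolding A_def B_def by blast
    then have "0 < card (A \<inter> B)" using fins by (auto simp: card_gt_0_iff)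
    moreover have "card A + card B + ?k \<le> card V + 1" using small unfolding A_def B_def .
    ultimately show ?thesis using UV(2) WV(2) by linarith
  next
    case False
    then obtain x where x: "x \<in> (V - U - A) \<inter> (V - W - B)" by blast
    have "neighbours E ((V - U - A) \<inter> (V - W - B)) \<subseteq> ((V - U - A) \<inter> (V - W - B)) \<union> C'"
      unfolding C'_def A_def B_def
      by (intro neighbours_Int_subset neighbours_complement_subset[OF G] neighbours_side_subset[OF G])
    moreover have "C' \<subseteq> V" using UV WV unfolding C'_def corner_separator_def by blast
    moreover have "u \<in> V - C' - (V - U - A) \<inter> (V - W - B)"
      using u in_side_self[of u V U E] unfolding C'_def A_def corner_separator_def by blast
    moreover have "x \<notin> C'" using x unfolding C'_def corner_separator_def by blast
    ultimately have "is_cut V E C'"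
      using x u(1) by (intro is_cut_if_closed[of C' V E "(V - U - A) \<inter> (V - W - B)" x u]) auto
    then have "?k \<le> card C'" by (rule vertex_connectivity_le_card[OF fin])
    moreover have "card C + card C' = card U + card W"
      unfolding C_def C'_def using card_corner_separators[OF fin UV(1) WV(1)] AV BV by blast
    ultimately show ?thesis using UV(2) WV(2) by linarith
  qed
  then show ?thesis unfolding C_def A_def B_def .
qed

lemma corner_separator_kappa_cut:
  assumes G: "simple_graph V E" and U: "is_kappa_cut V E U" and W: "is_kappa_cut V E W"
    and u: "u \<in> V" "u \<notin> U" "u \<notin> W"
    and small: "card (side V E U u) + card (side V E W u) + vertex_connectivity V E \<le> card V + 1"
  shows "is_kappa_cut V E (corner_separator (side V E U u) U (side V E W u) W)"
    and "u \<notin> corner_separator (side V E U u) U (side V E W u) W"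
    and "side V E (corner_separator (side V E U u) U (side V E W u) W) u
           \<subseteq> side V E U u \<inter> side V E W u"
proof -
  define A where "A = side V E U u"
  define B where "B = side V E W u"
  define C where "C = corner_separator A U B W"
  have fin: "finite V" using G unfolding simple_graph_def by blast
  have cut_U: "is_cut V E U" using U unfolding is_kappa_cut_def by blast
  have "u \<in> A \<inter> B"
    using u in_side_self[of u V U E] in_side_self[of u V W E] unfolding A_def B_def by blast
  then have uC: "u \<in> A \<inter> B - C" unfolding C_def corner_separator_def by blast
  have closed: "neighbours E (A \<inter> B) \<subseteq> (A \<inter> B) \<union> C"
    unfolding C_def A_def B_def by (intro neighbours_Int_subset neighbours_side_subset[OF G])
  have CV: "C \<subseteq> V"
    using side_subset[of V E U u] cut_U unfolding C_def A_def corner_separator_def is_cut_def by blast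
  obtain y where "y \<in> V - U" "y \<notin> A" using exists_outside_side[OF G cut_U] unfolding A_def .
  then have "y \<in> V - C - A \<inter> B" unfolding C_def corner_separator_def by blast
  then have "is_cut V E C" using is_cut_if_closed[OF CV closed uC] u(1) by blast
  then have "is_kappa_cut V E C"
    using vertex_connectivity_le_card[OF fin] card_corner_separator_le[OF assms]
    unfolding is_kappa_cut_def C_def A_def B_def by (simp add: le_antisym)
  moreover have "side V E C u \<subseteq> A \<inter> B" using side_subset_if_closed[OF closed] uC by blast
  ultimately show "is_kappa_cut V E (corner_separator (side V E U u) U (side V E W u) W)"
    and "u \<notin> corner_separator (side V E U u) U (side V E W u) W"
    and "side V E (corner_separator (side V E U u) U (side V E W u) W) u
           \<subseteq> side V E U u \<inter> side V E W u"
    using uC unfolding C_def A_def B_def by blast+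
qed

lemma side_subset_if_side_minimal:
  assumes G: "simple_graph V E" and S: "is_kappa_cut V E S" and W: "is_kappa_cut V E W"
    and u: "u \<in> V" "u \<notin> S" "u \<notin> W"
    and small: "card (side V E S u) + card (side V E W u) + vertex_connectivity V E \<le> card V + 1"
    and minimal: "\<And>C. is_kappa_cut V E C \<Longrightarrow> u \<notin> C \<Longrightarrow> side V E C u \<subseteq> side V E S u
      \<Longrightarrow> card (side V E S u) \<le> card (side V E C u)"
  shows "side V E S u \<subseteq> side V E W u"
proof -
  let ?C = "corner_separator (side V E S u) S (side V E W u) W"
  have C_sub: "side V E ?C u \<subseteq> side V E S u \<inter> side V E W u"
    by (rule corner_separator_kappa_cut(3)[OF G S W u small])
  then have "card (side V E S u) \<le> card (side V E ?C u)"
    using minimal corner_separator_kappa_cut(1,2)[OF G S W u small] by blast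
  then have "side V E ?C u = side V E S u"
    using card_seteq[OF finite_side[OF G]] C_sub by blast
  then show ?thesis using C_sub by blast
qed

lemma le_ceiling_half_imp_twice_le:
  fixes t k n :: nat
  assumes "int t \<le> \<lceil>(real n - real k) / 2\<rceil>"
  shows "2 * t + k \<le> n + 1"
proof -
  have "real t < (real n - real k) / 2 + 1"
    using assms ceiling_correct[of "(real n - real k) / 2"] by linarith
  then have "real (2 * t + k) < real (n + 2)" by (simp add: field_simps)
  then show ?thesis by linarith
qed

theorem theorem6:
  fixes V :: "'a set" and E :: "'a \<Rightarrow> 'a \<Rightarrow> bool" and u :: 'a and t :: nat
  assumes "simple_graph V E" and "graph_connected V E" and "\<not> graph_complete V E"
    and "4 * real (vertex_connectivity V E) < real (card V)"
    and "u \<in> V" and "0 < t"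
    and "int t \<le> \<lceil>(real (card V) - real (vertex_connectivity V E)) / 2\<rceil>"
    and "\<exists>U. is_kappa_cut V E U \<and> u \<notin> U \<and> card (side V E U u) \<le> t"
  shows "\<exists>!S. is_kappa_cut V E S \<and> u \<notin> S \<and> card (side V E S u) \<le> t \<and>
           (\<forall>U. is_kappa_cut V E U \<and> u \<notin> U \<and> card (side V E U u) \<le> t
                \<longrightarrow> side V E S u \<subseteq> side V E U u)"
proof -
  let ?P = "\<lambda>U. is_kappa_cut V E U \<and> u \<notin> U \<and> card (side V E U u) \<le> t"
  have t_bound: "2 * t + vertex_connectivity V E \<le> card V + 1"
    by (rule le_ceiling_half_imp_twice_le[OF assms(7)])
  obtain S where PS: "?P S" and least: "\<And>U. ?P U \<Longrightarrow> card (side V E S u) \<le> card (side V E U u)"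
    using ex_has_least_nat[of ?P _ "\<lambda>U. card (side V E U u)"] assms(8) by blast
  have below: "side V E S u \<subseteq> side V E W u" if "?P W" for W
  proof (rule side_subset_if_side_minimal[OF assms(1)])
    show "card (side V E S u) + card (side V E W u) + vertex_connectivity V E \<le> card V + 1"
      using PS that t_bound by linarith
    show "card (side V E S u) \<le> card (side V E C u)"
      if "is_kappa_cut V E C" "u \<notin> C" "side V E C u \<subseteq> side V E S u" for C
    proof -
      have "card (side V E C u) \<le> card (side V E S u)"
        using card_mono[OF finite_side[OF assms(1)] that(3)] .
      then show ?thesis using least that PS by simp
    qed
  qed (use PS that assms(5) in auto)
  show ?thesis
  proof (rule ex1I[of _ S])
    fix S' assume S': "is_kappa_cut V E S' \<and> u \<notin> S' \<and> card (side V E S' u) \<le> t \<and>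
      (\<forall>U. ?P U \<longrightarrow> side V E S' u \<subseteq> side V E U u)"
    then have "side V E S' u = side V E S u" using PS below by blast
    then show "S' = S"
      using kappa_cut_eq_neighbours_side[OF assms(1) _ assms(5)] S' PS by metis
  qed (use PS below in blast)
qed

end
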